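(* Let $A_{i,j}(z)=|z|^\gamma(|z|^2\delta_{i,j}-z_iz_j)$ on $\mathbb{R}^d$ with $-d-1\le\gamma\le 1$, and let $s_t:\mathbb{R}^d\to\mathbb{R}^d$ be any sufficiently regular time-dependent vector field. Consider the continuity equation $$\frac{\partial u_t}{\partial t}+\nabla\cdot(v_tu_t)=0,\qquad v_t(x)=-\int_{\mathbb{R}^d}A(x-y)\big[s_t(x)-s_t(y)\big]\,\mathrm{d}u_t(y),$$ with initial density $u_0$. 1. The density solution $u_t$ conserves mass, momentum and energy: $\int u_t=\int u_0$, $\int xu_t=\int xu_0$, $\int|x|^2u_t=\int|x|^2u_0$; moreover the estimated entropy $\mathcal{E}_t:=\int_0^t\int_{\mathbb{R}^d}s_\tau(x)\cdot v_\tau(x)u_\tau(x)\,\mathrm{d}x\,\mathrm{d}\tau$ satisfies $\frac{\mathrm{d}}{\mathrm{d}t}\mathcal{E}_t\le 0$. 2. The particle solution $\frac1n\sum_{i=1}^n\delta_{X_i(t)}$ with $\frac{\mathrm{d}X_i}{\mathrm{d}t}=v_t(X_i)$, where $v_t(X_i)=-\frac1n\sum_{j=1}^nA(X_i-X_j)[s_t(X_i)-s_t(X_j)]$, conserves mass, momentum and energy: $\frac1n\sum_iX_i(t)=\frac1n\sum_iX_i(0)$ and $\frac1n\sum_i|X_i(t)|^2=\frac1n\sum_i|X_i(0)|^2$; moreover $\mathcal{E}_t:=\frac1n\int_0^t\sum_{i=1}^n s_\tau(X_i)\cdot v_\tau(X_i)\,\mathrm{d}\tau$ satisfies $\frac{\mathrm{d}}{\mathrm{d}t}\mathcal{E}_t\le0$.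 3. The forward-Euler time-discretized particle solution $X_i^{k+1}=X_i^k+\Delta t\, v(X_i^k)$, where $v(X_i^k)=-\frac1n\sum_{j=1}^nA(X_i^k-X_j^k)[s(X_i^k)-s(X_j^k)]$ and $\{X_i^k\}_{i=1}^n$ are the particle locations at time $t_k=k\Delta t$, conserves mass and momentum, $\frac1n\sum_iX_i^{k+1}=\frac1n\sum_iX_i^k$, and the estimated entropy $\mathcal{E}^k:=\frac{\Delta t}{n}\sum_{j=1}^k\sum_{i=1}^n s(X_i^j)\cdot v(X_i^j)$ satisfies $\mathcal{E}^{k+1}\le\mathcal{E}^k$.
   Context: Solutions of the continuity equation are understood in the weak sense: $u_t$ is a curve of probability measures with $\frac{\mathrm{d}}{\mathrm{d}t}\int\phi\,\mathrm{d}u_t=\int\nabla\phi\cdot v_t\,\mathrm{d}u_t$ for all test functions $\phi$. *)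

theory Defs
  imports "HOL-Analysis.Analysis" "HOL-Probability.Probability"
begin

text \<open>The matrix-valued kernel A(z) = |z|^gamma (|z|^2 I - z z^T) on R^d (d = CARD('n)).
  At z = 0 the factor 0 powr gamma is 0 by Isabelle's convention, so A(0) = 0.\<close>
definition kerA :: "real \<Rightarrow> real^'n \<Rightarrow> real^'n^'n" where
  "kerA \<gamma> z = (\<chi> i j. norm z powr \<gamma> * ((norm z)^2 * (if i = j then 1 else 0) - z$i * z$j))"

definition vel :: "real \<Rightarrow> (real^'n \<Rightarrow> real^'n) \<Rightarrow> (real^'n) measure \<Rightarrow> real^'n \<Rightarrow> real^'n" where
  "vel \<gamma> s \<mu> x = - (\<integral>y. kerA \<gamma> (x - y) *v (s x - s y) \<partial>\<mu>)"

definition vel_particles :: "real \<Rightarrow> (real^'n \<Rightarrow> real^'n) \<Rightarrow> nat \<Rightarrow> (nat \<Rightarrow> real^'n) \<Rightarrow> nat \<Rightarrow> real^'n" where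
  "vel_particles \<gamma> s n X i = - ((1 / real n) *\<^sub>R (\<Sum>j<n. kerA \<gamma> (X i - X j) *v (s (X i) - s (X j))))"

definition test_fn :: "(real^'n \<Rightarrow> real) \<Rightarrow> (real^'n \<Rightarrow> real^'n) \<Rightarrow> bool" where
  "test_fn \<phi> g \<longleftrightarrow> (\<forall>x. (\<phi> has_derivative (\<lambda>h. g x \<bullet> h)) (at x)) \<and> continuous_on UNIV g \<and>
     (\<exists>C. \<forall>x. \<bar>\<phi> x\<bar> \<le> C * (1 + (norm x)^2) \<and> norm (g x) \<le> C * (1 + norm x))"

definition weak_continuity_solution ::
    "(real \<Rightarrow> (real^'n) measure) \<Rightarrow> (real \<Rightarrow> real^'n \<Rightarrow> real^'n) \<Rightarrow> bool" where
  "weak_continuity_solution u v \<longleftrightarrow>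
     (\<forall>t\<ge>0. prob_space (u t) \<and> sets (u t) = sets borel) \<and>
     (\<forall>\<phi> g. test_fn \<phi> g \<longrightarrow> (\<forall>t\<ge>0.
        ((\<lambda>\<tau>. \<integral>x. \<phi> x \<partial>u \<tau>) has_real_derivative (\<integral>x. g x \<bullet> v t x \<partial>u t)) (at t within {0..})))"

end

theory Submission
  imports Defs
begin

text \<open>The kernel A(z) is even in z, symmetric positive semidefinite, and annihilates z.
  Hence the interaction F(x, y) = A(x - y) (s x - s y) is antisymmetric, and pairing the
  velocity with any weight w symmetrises:
  int w . v du = - 1/2 int int (w x - w y) . F(x, y) du(x) du(y),
  and likewise for the particle sums. The right-hand side vanishes for constant w (momentum)
  and for w x = x (energy, because (x - y) . A(x - y) = 0), and for w = s it is minus half a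
  nonnegative quadratic form (entropy). The weak formulation identifies these pairings with
  the time derivatives of the moments; for the Euler scheme momentum is conserved step by step.\<close>

lemma kerA_mult_vector:
  "kerA \<gamma> z *v w = (norm z powr \<gamma>) *\<^sub>R ((norm z)\<^sup>2 *\<^sub>R w - (z \<bullet> w) *\<^sub>R z)"
proof -
  have "(kerA \<gamma> z *v w) $ i = norm z powr \<gamma> * ((norm z)\<^sup>2 * w $ i - z $ i * (z \<bullet> w))" for i
  proof -
    have "(kerA \<gamma> z *v w) $ i
        = (\<Sum>j\<in>UNIV. (if i = j then norm z powr \<gamma> * ((norm z)\<^sup>2 * w $ j) else 0)
                        - norm z powr \<gamma> * (z $ i * (z $ j * w $ j)))"
      unfolding matrix_vector_mult_def vec_lambda_beta
      by (intro sum.cong refl) (simp add: kerA_def algebra_simps)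
    also have "\<dots> = norm z powr \<gamma> * ((norm z)\<^sup>2 * w $ i) - norm z powr \<gamma> * (z $ i * (z \<bullet> w))"
      by (simp add: sum_subtractf sum_distrib_left[symmetric] inner_vec_def)
    finally show ?thesis
      by (simp add: algebra_simps)
  qed
  then show ?thesis
    by (simp add: vec_eq_iff algebra_simps)
qed

lemma kerA_minus [simp]: "kerA \<gamma> (- z) = kerA \<gamma> z"
  by (simp add: kerA_def)

lemma inner_kerA_mult_self_eq_0: "z \<bullet> (kerA \<gamma> z *v w) = 0"
  by (simp add: kerA_mult_vector inner_diff_right inner_commute power2_norm_eq_inner)

lemma inner_kerA_mult_nonneg: "0 \<le> w \<bullet> (kerA \<gamma> z *v w)"
proof -
  have "(z \<bullet> w)\<^sup>2 \<le> (norm z * norm w)\<^sup>2"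
    by (metis Cauchy_Schwarz_ineq2 abs_ge_zero power2_abs power_mono)
  then have "(z \<bullet> w)\<^sup>2 \<le> (norm z)\<^sup>2 * (w \<bullet> w)"
    by (simp add: power_mult_distrib power2_norm_eq_inner)
  then show ?thesis
    by (simp add: kerA_mult_vector inner_diff_right inner_commute power2_eq_square)
qed

lemma kerA_mult_swap: "kerA \<gamma> (y - x) *v (a - b) = - (kerA \<gamma> (x - y) *v (b - a))"
  using kerA_minus[of \<gamma> "x - y"] by (simp add: matrix_vector_mult_diff_distrib)

lemma sum_sum_inner_antisymmetric:
  fixes F :: "'i \<Rightarrow> 'i \<Rightarrow> 'a::real_inner"
  assumes antisym: "\<And>i j. F j i = - F i j"
  shows "(\<Sum>i\<in>I. \<Sum>j\<in>I. w i \<bullet> F i j) = (\<Sum>i\<in>I. \<Sum>j\<in>I. (w i - w j) \<bullet> F i j) / 2"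
proof -
  have "(\<Sum>i\<in>I. \<Sum>j\<in>I. w j \<bullet> F i j) = (\<Sum>j\<in>I. \<Sum>i\<in>I. w j \<bullet> F i j)"
    by (rule sum.swap)
  also have "\<dots> = (\<Sum>j\<in>I. \<Sum>i\<in>I. - (w j \<bullet> F j i))"
    by (intro sum.cong refl) (metis antisym inner_minus_right)
  also have "\<dots> = - (\<Sum>i\<in>I. \<Sum>j\<in>I. w i \<bullet> F i j)"
    by (simp add: sum_negf)
  finally show ?thesis
    by (simp add: inner_diff_left sum_subtractf)
qed

lemma integral_pair_inner_antisymmetric:
  fixes F :: "'a \<Rightarrow> 'a \<Rightarrow> 'b::real_inner"
  assumes "sigma_finite_measure M"
    and antisym: "\<And>x y. F y x = - F x y"
    and int: "integrable (M \<Otimes>\<^sub>M M) (\<lambda>(x, y). w x \<bullet> F x y)"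
  shows "(\<integral>(x, y). w x \<bullet> F x y \<partial>(M \<Otimes>\<^sub>M M))
           = (\<integral>(x, y). (w x - w y) \<bullet> F x y \<partial>(M \<Otimes>\<^sub>M M)) / 2"
proof -
  interpret pair_sigma_finite M M
    using assms(1) by (simp add: pair_sigma_finite_def)
  have swapped: "(\<lambda>(x, y). w y \<bullet> F x y) = (\<lambda>(x, y). - ((\<lambda>(x, y). w x \<bullet> F x y) (y, x)))"
  proof
    fix p :: "'a \<times> 'a"
    obtain x y where "p = (x, y)"
      by (cases p)
    then show "(case p of (x, y) \<Rightarrow> w y \<bullet> F x y) = (case p of (x, y) \<Rightarrow> - ((\<lambda>(x, y). w x \<bullet> F x y) (y, x)))"
      using antisym[of y x] by simp
  qed
  have int_swapped: "integrable (M \<Otimes>\<^sub>M M) (\<lambda>(x, y). w y \<bullet> F x y)"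
    unfolding swapped case_prod_beta' using integrable_product_swap[OF int]
    by (simp add: case_prod_beta')
  have "(\<integral>(x, y). w y \<bullet> F x y \<partial>(M \<Otimes>\<^sub>M M)) = - (\<integral>(x, y). w x \<bullet> F x y \<partial>(M \<Otimes>\<^sub>M M))"
    unfolding swapped using integral_product_swap[OF borel_measurable_integrable[OF int]]
    by (simp add: case_prod_beta')
  moreover have "(\<integral>(x, y). (w x - w y) \<bullet> F x y \<partial>(M \<Otimes>\<^sub>M M))
      = (\<integral>(x, y). w x \<bullet> F x y \<partial>(M \<Otimes>\<^sub>M M)) - (\<integral>(x, y). w y \<bullet> F x y \<partial>(M \<Otimes>\<^sub>M M))"
    using Bochner_Integration.integral_diff[OF int int_swapped]
    by (simp add: inner_diff_left case_prod_beta')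
  ultimately show ?thesis
    by simp
qed

lemma sum_inner_vel_particles:
  "(\<Sum>i<n. w i \<bullet> vel_particles \<gamma> s n Y i)
     = - (\<Sum>i<n. \<Sum>j<n. (w i - w j) \<bullet> (kerA \<gamma> (Y i - Y j) *v (s (Y i) - s (Y j)))) / (2 * real n)"
proof -
  have "(\<Sum>i<n. w i \<bullet> vel_particles \<gamma> s n Y i)
      = - (\<Sum>i<n. \<Sum>j<n. w i \<bullet> (kerA \<gamma> (Y i - Y j) *v (s (Y i) - s (Y j)))) / real n"
    by (simp add: vel_particles_def inner_sum_right sum_negf sum_divide_distrib)
  also have "\<dots> = - (\<Sum>i<n. \<Sum>j<n. (w i - w j) \<bullet> (kerA \<gamma> (Y i - Y j) *v (s (Y i) - s (Y j)))) / (2 * real n)"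
    by (simp add: sum_sum_inner_antisymmetric[OF kerA_mult_swap])
  finally show ?thesis .
qed

lemma sum_vel_particles_eq_0: "(\<Sum>i<n. vel_particles \<gamma> s n Y i) = 0"
proof -
  have "c \<bullet> (\<Sum>i<n. vel_particles \<gamma> s n Y i) = 0" for c
    using sum_inner_vel_particles[of "\<lambda>_. c"] by (simp add: inner_sum_right)
  then show ?thesis
    by (metis inner_eq_zero_iff)
qed

lemma sum_inner_self_vel_particles_eq_0: "(\<Sum>i<n. Y i \<bullet> vel_particles \<gamma> s n Y i) = 0"
  by (simp add: sum_inner_vel_particles inner_kerA_mult_self_eq_0)

lemma sum_inner_vel_particles_nonpos: "(\<Sum>i<n. s (Y i) \<bullet> vel_particles \<gamma> s n Y i) \<le> 0"
  unfolding sum_inner_vel_particles by (simp add: sum_nonneg inner_kerA_mult_nonneg)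

lemma integral_inner_vel:
  fixes M :: "(real^'n) measure" and s w :: "real^'n \<Rightarrow> real^'n"
  assumes "sigma_finite_measure M"
    and int_F: "integrable (M \<Otimes>\<^sub>M M) (\<lambda>(x, y). kerA \<gamma> (x - y) *v (s x - s y))"
    and int_wF: "integrable (M \<Otimes>\<^sub>M M) (\<lambda>(x, y). w x \<bullet> (kerA \<gamma> (x - y) *v (s x - s y)))"
    and w: "w \<in> borel_measurable M"
  shows "(\<integral>x. w x \<bullet> vel \<gamma> s M x \<partial>M)
           = - (\<integral>(x, y). (w x - w y) \<bullet> (kerA \<gamma> (x - y) *v (s x - s y)) \<partial>(M \<Otimes>\<^sub>M M)) / 2"
proof -
  interpret pair_sigma_finite M M
    using assms(1) by (simp add: pair_sigma_finite_def)
  define F where "F x y = kerA \<gamma> (x - y) *v (s x - s y)" for x y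
  have int_F': "integrable (M \<Otimes>\<^sub>M M) (case_prod F)"
    using int_F by (simp add: F_def[abs_def])
  have int_wF': "integrable (M \<Otimes>\<^sub>M M) (\<lambda>(x, y). w x \<bullet> F x y)"
    using int_wF by (simp add: F_def)
  have F_measurable: "case_prod F \<in> borel_measurable (M \<Otimes>\<^sub>M M)"
    using int_F' by (rule borel_measurable_integrable)
  have wF_measurable: "(\<lambda>(x, y). w x \<bullet> F x y) \<in> borel_measurable (M \<Otimes>\<^sub>M M)"
    using int_wF' by (rule borel_measurable_integrable)
  have "(\<integral>x. w x \<bullet> vel \<gamma> s M x \<partial>M) = (\<integral>x. - (\<integral>y. w x \<bullet> F x y \<partial>M) \<partial>M)"
  proof (rule integral_cong_AE)
    have "(\<lambda>x. \<integral>y. F x y \<partial>M) \<in> borel_measurable M"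
      by (rule sigma_finite_measure.borel_measurable_lebesgue_integral[OF assms(1) F_measurable])
    then show "(\<lambda>x. w x \<bullet> vel \<gamma> s M x) \<in> borel_measurable M"
      unfolding vel_def F_def[symmetric] by (intro borel_measurable_inner borel_measurable_uminus w)
    show "(\<lambda>x. - (\<integral>y. w x \<bullet> F x y \<partial>M)) \<in> borel_measurable M"
      using sigma_finite_measure.borel_measurable_lebesgue_integral[OF assms(1) wF_measurable] by simp
    show "AE x in M. w x \<bullet> vel \<gamma> s M x = - (\<integral>y. w x \<bullet> F x y \<partial>M)"
      using AE_integrable_fst[OF int_F'] by eventually_elim (simp add: vel_def F_def)
  qed
  also have "\<dots> = - (\<integral>(x, y). w x \<bullet> F x y \<partial>(M \<Otimes>\<^sub>M M))"
    using integral_fst[OF int_wF'] by simp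
  also have "\<dots> = - (\<integral>(x, y). (w x - w y) \<bullet> F x y \<partial>(M \<Otimes>\<^sub>M M)) / 2"
  proof -
    have "F y x = - F x y" for x y
      unfolding F_def by (rule kerA_mult_swap)
    then have "(\<integral>(x, y). w x \<bullet> F x y \<partial>(M \<Otimes>\<^sub>M M))
        = (\<integral>(x, y). (w x - w y) \<bullet> F x y \<partial>(M \<Otimes>\<^sub>M M)) / 2"
      using int_wF' by (rule integral_pair_inner_antisymmetric[OF assms(1)])
    then show ?thesis
      by simp
  qed
  finally show ?thesis
    by (simp add: F_def)
qed

context
  fixes \<gamma> :: real and M :: "(real^'n) measure" and s :: "real^'n \<Rightarrow> real^'n"
  assumes prob: "prob_space M"
    and sets_M: "sets M = sets borel"
    and s_borel [measurable]: "s \<in> borel_measurable borel"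
    and weighted_int: "integrable (M \<Otimes>\<^sub>M M)
          (\<lambda>(x, y). norm (kerA \<gamma> (x - y) *v (s x - s y)) * (1 + norm x + norm (s x)))"
begin

lemma integral_inner_vel_of_growth:
  assumes w [measurable]: "w \<in> borel_measurable borel"
    and growth: "\<And>x. norm (w x) \<le> C * (1 + norm x + norm (s x))"
  shows "(\<integral>x. w x \<bullet> vel \<gamma> s M x \<partial>M)
           = - (\<integral>(x, y). (w x - w y) \<bullet> (kerA \<gamma> (x - y) *v (s x - s y)) \<partial>(M \<Otimes>\<^sub>M M)) / 2"
proof -
  have "0 \<le> C * (1 + norm (s 0))"
    using order_trans[OF norm_ge_zero growth[of 0]] by simp
  then have C: "0 \<le> C"
    using norm_ge_zero[of "s 0"] by (auto simp: zero_le_mult_iff)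
  have sets_MM: "sets (M \<Otimes>\<^sub>M M) = sets (borel \<Otimes>\<^sub>M borel)"
    by (rule sets_pair_measure_cong[OF sets_M sets_M])
  have F_measurable: "(\<lambda>(x, y). kerA \<gamma> (x - y) *v (s x - s y)) \<in> borel_measurable (M \<Otimes>\<^sub>M M)"
    unfolding kerA_mult_vector measurable_cong_sets[OF sets_MM refl] by measurable
  have wF_measurable:
    "(\<lambda>(x, y). w x \<bullet> (kerA \<gamma> (x - y) *v (s x - s y))) \<in> borel_measurable (M \<Otimes>\<^sub>M M)"
    unfolding kerA_mult_vector measurable_cong_sets[OF sets_MM refl] by measurable
  have int_F: "integrable (M \<Otimes>\<^sub>M M) (\<lambda>(x, y). kerA \<gamma> (x - y) *v (s x - s y))"
  proof (rule Bochner_Integration.integrable_bound[OF weighted_int F_measurable], intro AE_I2, clarify)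
    fix x y
    show "norm (kerA \<gamma> (x - y) *v (s x - s y))
        \<le> norm (norm (kerA \<gamma> (x - y) *v (s x - s y)) * (1 + norm x + norm (s x)))"
      by (simp add: mult_le_cancel_left1)
  qed
  have int_wF: "integrable (M \<Otimes>\<^sub>M M) (\<lambda>(x, y). w x \<bullet> (kerA \<gamma> (x - y) *v (s x - s y)))"
  proof (rule Bochner_Integration.integrable_bound[OF integrable_mult_right[OF weighted_int, of C]
        wF_measurable], intro AE_I2, clarify)
    fix x y
    have "\<bar>w x \<bullet> (kerA \<gamma> (x - y) *v (s x - s y))\<bar> \<le> norm (w x) * norm (kerA \<gamma> (x - y) *v (s x - s y))"
      by (rule Cauchy_Schwarz_ineq2)
    also have "\<dots> \<le> C * (1 + norm x + norm (s x)) * norm (kerA \<gamma> (x - y) *v (s x - s y))"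
      by (intro mult_right_mono growth norm_ge_zero)
    finally show "norm (w x \<bullet> (kerA \<gamma> (x - y) *v (s x - s y)))
        \<le> norm (C * (norm (kerA \<gamma> (x - y) *v (s x - s y)) * (1 + norm x + norm (s x))))"
      using C by (simp add: abs_mult mult_ac)
  qed
  have "sigma_finite_measure M"
    using prob by (rule prob_space_imp_sigma_finite)
  moreover have "w \<in> borel_measurable M"
    by (subst measurable_cong_sets[OF sets_M refl]) (rule w)
  ultimately show ?thesis
    using int_F int_wF by (intro integral_inner_vel)
qed

lemma integral_const_inner_vel_eq_0: "(\<integral>x. c \<bullet> vel \<gamma> s M x \<partial>M) = 0"
proof -
  have "(\<integral>x. c \<bullet> vel \<gamma> s M x \<partial>M)
      = - (\<integral>(x, y). (c - c) \<bullet> (kerA \<gamma> (x - y) *v (s x - s y)) \<partial>(M \<Otimes>\<^sub>M M)) / 2"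
    by (rule integral_inner_vel_of_growth[where C = "norm c"]) (simp_all add: mult_le_cancel_left1)
  then show ?thesis
    by (simp add: case_prod_unfold)
qed

lemma integral_self_inner_vel_eq_0: "(\<integral>x. x \<bullet> vel \<gamma> s M x \<partial>M) = 0"
proof -
  have "(\<integral>x. x \<bullet> vel \<gamma> s M x \<partial>M)
      = - (\<integral>(x, y). (x - y) \<bullet> (kerA \<gamma> (x - y) *v (s x - s y)) \<partial>(M \<Otimes>\<^sub>M M)) / 2"
    by (rule integral_inner_vel_of_growth[where C = 1]) simp_all
  then show ?thesis
    by (simp add: inner_kerA_mult_self_eq_0 case_prod_unfold)
qed

lemma integral_inner_vel_nonpos: "(\<integral>x. s x \<bullet> vel \<gamma> s M x \<partial>M) \<le> 0"
proof -
  have "(\<integral>x. s x \<bullet> vel \<gamma> s M x \<partial>M)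
      = - (\<integral>(x, y). (s x - s y) \<bullet> (kerA \<gamma> (x - y) *v (s x - s y)) \<partial>(M \<Otimes>\<^sub>M M)) / 2"
    by (rule integral_inner_vel_of_growth[where C = 1]) simp_all
  moreover have "0 \<le> (\<integral>(x, y). (s x - s y) \<bullet> (kerA \<gamma> (x - y) *v (s x - s y)) \<partial>(M \<Otimes>\<^sub>M M))"
    by (intro Bochner_Integration.integral_nonneg) (auto simp: inner_kerA_mult_nonneg)
  ultimately show ?thesis
    by simp
qed

end

lemma integral_has_real_derivative_atLeast:
  fixes f :: "real \<Rightarrow> real"
  assumes "continuous_on {a..} f" and "a \<le> t"
  shows "((\<lambda>x. integral {a..x} f) has_real_derivative f t) (at t within {a..})"
proof -
  have "((\<lambda>x. integral {a..x} f) has_real_derivative f t) (at t within {a..t + 1})"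
    by (rule integral_has_real_derivative) (use assms in \<open>auto intro: continuous_on_subset\<close>)
  moreover have "at t within {a..t + 1} = at t within {a..}"
    by (rule at_within_nhd[where S = "{..<t + 1}"]) auto
  ultimately show ?thesis
    by simp
qed

lemma has_vector_derivative_zero_atLeast_eq:
  fixes f :: "real \<Rightarrow> 'a::real_normed_vector"
  assumes "\<And>\<tau>. a \<le> \<tau> \<Longrightarrow> (f has_vector_derivative 0) (at \<tau> within {a..})" and "a \<le> t"
  shows "f t = f a"
proof -
  obtain c where "\<And>\<tau>. \<tau> \<in> {a..} \<Longrightarrow> f \<tau> = c"
    using has_vector_derivative_zero_constant[of "{a..}" f] assms(1) by blast
  then show ?thesis
    using assms(2) by auto
qed

lemma has_real_derivative_sqnorm:
  assumes "(f has_vector_derivative v) (at t within S)"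
  shows "((\<lambda>\<tau>. (norm (f \<tau>))\<^sup>2) has_real_derivative 2 * (f t \<bullet> v)) (at t within S)"
proof -
  have f': "(f has_derivative (\<lambda>h. h *\<^sub>R v)) (at t within S)"
    using assms by (simp add: has_vector_derivative_def)
  have "((\<lambda>\<tau>. f \<tau> \<bullet> f \<tau>) has_derivative (\<lambda>h. f t \<bullet> (h *\<^sub>R v) + (h *\<^sub>R v) \<bullet> f t)) (at t within S)"
    by (rule has_derivative_inner[OF f' f'])
  moreover have "(\<lambda>h. f t \<bullet> (h *\<^sub>R v) + (h *\<^sub>R v) \<bullet> f t) = (*) (2 * (f t \<bullet> v))"
    by (auto simp: fun_eq_iff inner_commute algebra_simps)
  ultimately show ?thesis
    by (simp add: has_field_derivative_def power2_norm_eq_inner)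
qed

lemma le_one_plus_power2: "(a::real) \<le> 1 + a\<^sup>2"
proof -
  have "0 \<le> (a - 1/2)\<^sup>2"
    by simp
  then show ?thesis
    by (simp add: power2_eq_square algebra_simps)
qed

lemma integrable_ident_of_integrable_sqnorm:
  fixes M :: "'a::euclidean_space measure"
  assumes "finite_measure M" and sets_M: "sets M = sets borel"
    and "integrable M (\<lambda>x. (norm x)\<^sup>2)"
  shows "integrable M (\<lambda>x. x)"
proof (rule Bochner_Integration.integrable_bound)
  show "integrable M (\<lambda>x. 1 + (norm x)\<^sup>2)"
    by (intro Bochner_Integration.integrable_add finite_measure.integrable_const assms(1,3))
  show "(\<lambda>x. x) \<in> borel_measurable M"
    by (subst measurable_cong_sets[OF sets_M refl]) simp
  show "AE x in M. norm x \<le> norm (1 + (norm x)\<^sup>2)"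
    by (intro AE_I2) (simp add: le_one_plus_power2)
qed

lemma test_fn_inner_left: "test_fn (\<lambda>x. c \<bullet> x) (\<lambda>_. c :: real^'n)"
  unfolding test_fn_def
proof (intro conjI allI exI[of _ "norm c"])
  fix x :: "real^'n"
  show "((\<lambda>x. c \<bullet> x) has_derivative (\<lambda>h. c \<bullet> h)) (at x)"
    by (rule has_derivative_inner_right[OF has_derivative_ident])
  have "norm c * norm x \<le> norm c * (1 + (norm x)\<^sup>2)"
    by (intro mult_left_mono le_one_plus_power2 norm_ge_zero)
  then show "\<bar>c \<bullet> x\<bar> \<le> norm c * (1 + (norm x)\<^sup>2)"
    using Cauchy_Schwarz_ineq2[of c x] by linarith
  show "norm c \<le> norm c * (1 + norm x)"
    by (simp add: mult_le_cancel_left1)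
qed simp

lemma test_fn_sqnorm: "test_fn (\<lambda>x. (norm x)\<^sup>2) (\<lambda>x. 2 *\<^sub>R x)"
  unfolding test_fn_def
proof (intro conjI allI exI[of _ 2])
  fix x :: "real^'n"
  show "((\<lambda>x. (norm x)\<^sup>2) has_derivative (\<lambda>h. (2 *\<^sub>R x) \<bullet> h)) (at x)"
    using has_derivative_sqnorm_at[of x] by simp
  show "\<bar>(norm x)\<^sup>2\<bar> \<le> 2 * (1 + (norm x)\<^sup>2)"
    by simp
  show "norm (2 *\<^sub>R x) \<le> 2 * (1 + norm x)"
    by simp
qed (intro continuous_intros)

lemma weak_continuity_solution_integral_eq:
  assumes weak: "weak_continuity_solution u v" and "test_fn \<phi> g"
    and flux_0: "\<And>\<tau>. 0 \<le> \<tau> \<Longrightarrow> (\<integral>x. g x \<bullet> v \<tau> x \<partial>u \<tau>) = 0"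
    and "0 \<le> t"
  shows "(\<integral>x. \<phi> x \<partial>u t) = (\<integral>x. \<phi> x \<partial>u 0)"
proof (rule has_vector_derivative_zero_atLeast_eq[OF _ \<open>0 \<le> t\<close>])
  fix \<tau> :: real
  assume "0 \<le> \<tau>"
  then have "((\<lambda>\<tau>. \<integral>x. \<phi> x \<partial>u \<tau>) has_real_derivative (\<integral>x. g x \<bullet> v \<tau> x \<partial>u \<tau>))
      (at \<tau> within {0..})"
    using weak \<open>test_fn \<phi> g\<close> unfolding weak_continuity_solution_def by blast
  then have "((\<lambda>\<tau>. \<integral>x. \<phi> x \<partial>u \<tau>) has_real_derivative 0) (at \<tau> within {0..})"
    using flux_0 \<open>0 \<le> \<tau>\<close> by simp
  then show "((\<lambda>\<tau>. \<integral>x. \<phi> x \<partial>u \<tau>) has_vector_derivative 0) (at \<tau> within {0..})"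
    by (simp add: has_real_derivative_iff_has_vector_derivative)
qed

theorem continuity_equation_conservation:
  fixes u :: "real \<Rightarrow> (real^'n) measure" and s :: "real \<Rightarrow> real^'n \<Rightarrow> real^'n"
  assumes weak: "weak_continuity_solution u (\<lambda>t. vel \<gamma> (s t) (u t))"
    and s_borel: "\<And>t. 0 \<le> t \<Longrightarrow> s t \<in> borel_measurable borel"
    and sqnorm_int: "\<And>t. 0 \<le> t \<Longrightarrow> integrable (u t) (\<lambda>x. (norm x)\<^sup>2)"
    and weighted_int: "\<And>t. 0 \<le> t \<Longrightarrow> integrable (u t \<Otimes>\<^sub>M u t)
          (\<lambda>(x, y). norm (kerA \<gamma> (x - y) *v (s t x - s t y)) * (1 + norm x + norm (s t x)))"
    and entropy_rate_cont: "continuous_on {0..} (\<lambda>\<tau>. \<integral>x. s \<tau> x \<bullet> vel \<gamma> (s \<tau>) (u \<tau>) x \<partial>u \<tau>)"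
    and t: "0 \<le> t"
  shows "measure (u t) (space (u t)) = measure (u 0) (space (u 0))"
    and "(\<integral>x. x \<partial>u t) = (\<integral>x. x \<partial>u 0)"
    and "(\<integral>x. (norm x)\<^sup>2 \<partial>u t) = (\<integral>x. (norm x)\<^sup>2 \<partial>u 0)"
    and "\<exists>D. ((\<lambda>t. integral {0..t} (\<lambda>\<tau>. \<integral>x. s \<tau> x \<bullet> vel \<gamma> (s \<tau>) (u \<tau>) x \<partial>u \<tau>))
            has_real_derivative D) (at t within {0..}) \<and> D \<le> 0"
proof -
  have prob: "prob_space (u \<tau>)" and sets_u: "sets (u \<tau>) = sets borel" if "0 \<le> \<tau>" for \<tau>
    using weak that unfolding weak_continuity_solution_def by auto
  note flux_const = integral_const_inner_vel_eq_0[OF prob sets_u s_borel weighted_int]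
  note flux_self = integral_self_inner_vel_eq_0[OF prob sets_u s_borel weighted_int]
  note conserved = weak_continuity_solution_integral_eq[OF weak _ _ t]
  show "measure (u t) (space (u t)) = measure (u 0) (space (u 0))"
    using prob_space.prob_space[OF prob[OF t]] prob_space.prob_space[OF prob[of 0]] by simp
  have "c \<bullet> (\<integral>x. x \<partial>u t) = c \<bullet> (\<integral>x. x \<partial>u 0)" for c
  proof -
    have "integrable (u \<tau>) (\<lambda>x. x)" if "0 \<le> \<tau>" for \<tau>
      using prob_space.axioms(1)[OF prob[OF that]] sets_u[OF that] sqnorm_int[OF that]
      by (rule integrable_ident_of_integrable_sqnorm)
    moreover have "(\<integral>x. c \<bullet> x \<partial>u t) = (\<integral>x. c \<bullet> x \<partial>u 0)"
      by (rule conserved[OF test_fn_inner_left]) (simp add: flux_const)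
    ultimately show ?thesis
      using t by simp
  qed
  from this[of "(\<integral>x. x \<partial>u t) - (\<integral>x. x \<partial>u 0)"]
  have "((\<integral>x. x \<partial>u t) - (\<integral>x. x \<partial>u 0)) \<bullet> ((\<integral>x. x \<partial>u t) - (\<integral>x. x \<partial>u 0)) = 0"
    by (simp add: inner_diff_right)
  then show "(\<integral>x. x \<partial>u t) = (\<integral>x. x \<partial>u 0)"
    by simp
  show "(\<integral>x. (norm x)\<^sup>2 \<partial>u t) = (\<integral>x. (norm x)\<^sup>2 \<partial>u 0)"
    by (rule conserved[OF test_fn_sqnorm]) (simp add: flux_self)
  show "\<exists>D. ((\<lambda>t. integral {0..t} (\<lambda>\<tau>. \<integral>x. s \<tau> x \<bullet> vel \<gamma> (s \<tau>) (u \<tau>) x \<partial>u \<tau>))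
            has_real_derivative D) (at t within {0..}) \<and> D \<le> 0"
  proof (intro exI conjI)
    show "((\<lambda>t. integral {0..t} (\<lambda>\<tau>. \<integral>x. s \<tau> x \<bullet> vel \<gamma> (s \<tau>) (u \<tau>) x \<partial>u \<tau>))
        has_real_derivative (\<integral>x. s t x \<bullet> vel \<gamma> (s t) (u t) x \<partial>u t)) (at t within {0..})"
      by (rule integral_has_real_derivative_atLeast[OF entropy_rate_cont t])
    show "(\<integral>x. s t x \<bullet> vel \<gamma> (s t) (u t) x \<partial>u t) \<le> 0"
      by (rule integral_inner_vel_nonpos[OF prob[OF t] sets_u[OF t] s_borel[OF t] weighted_int[OF t]])
  qed
qed

theorem particle_conservation:
  fixes s :: "real \<Rightarrow> real^'n \<Rightarrow> real^'n" and X :: "real \<Rightarrow> nat \<Rightarrow> real^'n"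
  assumes flow: "\<And>i t. i < n \<Longrightarrow> 0 \<le> t \<Longrightarrow>
          ((\<lambda>\<tau>. X \<tau> i) has_vector_derivative vel_particles \<gamma> (s t) n (X t) i) (at t within {0..})"
    and entropy_rate_cont:
          "continuous_on {0..} (\<lambda>\<tau>. \<Sum>i<n. s \<tau> (X \<tau> i) \<bullet> vel_particles \<gamma> (s \<tau>) n (X \<tau>) i)"
    and t: "0 \<le> t"
  shows "(\<Sum>i<n. X t i) = (\<Sum>i<n. X 0 i)"
    and "(\<Sum>i<n. (norm (X t i))\<^sup>2) = (\<Sum>i<n. (norm (X 0 i))\<^sup>2)"
    and "\<exists>D. ((\<lambda>t. (1 / real n) * integral {0..t}
              (\<lambda>\<tau>. \<Sum>i<n. s \<tau> (X \<tau> i) \<bullet> vel_particles \<gamma> (s \<tau>) n (X \<tau>) i))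
            has_real_derivative D) (at t within {0..}) \<and> D \<le> 0"
proof -
  show "(\<Sum>i<n. X t i) = (\<Sum>i<n. X 0 i)"
  proof (rule has_vector_derivative_zero_atLeast_eq[OF _ t])
    fix \<tau> :: real
    assume "0 \<le> \<tau>"
    then have "((\<lambda>\<tau>. \<Sum>i<n. X \<tau> i) has_vector_derivative (\<Sum>i<n. vel_particles \<gamma> (s \<tau>) n (X \<tau>) i))
        (at \<tau> within {0..})"
      by (intro has_vector_derivative_sum flow) auto
    then show "((\<lambda>\<tau>. \<Sum>i<n. X \<tau> i) has_vector_derivative 0) (at \<tau> within {0..})"
      by (simp add: sum_vel_particles_eq_0)
  qed
  show "(\<Sum>i<n. (norm (X t i))\<^sup>2) = (\<Sum>i<n. (norm (X 0 i))\<^sup>2)"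
  proof (rule has_vector_derivative_zero_atLeast_eq[OF _ t])
    fix \<tau> :: real
    assume "0 \<le> \<tau>"
    then have "((\<lambda>\<tau>. \<Sum>i<n. (norm (X \<tau> i))\<^sup>2)
        has_real_derivative (\<Sum>i<n. 2 * (X \<tau> i \<bullet> vel_particles \<gamma> (s \<tau>) n (X \<tau>) i))) (at \<tau> within {0..})"
      by (intro DERIV_sum has_real_derivative_sqnorm flow) auto
    then show "((\<lambda>\<tau>. \<Sum>i<n. (norm (X \<tau> i))\<^sup>2) has_vector_derivative 0) (at \<tau> within {0..})"
      by (simp add: sum_distrib_left[symmetric] sum_inner_self_vel_particles_eq_0
          has_real_derivative_iff_has_vector_derivative[symmetric])
  qed
  show "\<exists>D. ((\<lambda>t. (1 / real n) * integral {0..t}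
              (\<lambda>\<tau>. \<Sum>i<n. s \<tau> (X \<tau> i) \<bullet> vel_particles \<gamma> (s \<tau>) n (X \<tau>) i))
            has_real_derivative D) (at t within {0..}) \<and> D \<le> 0"
  proof (intro exI conjI)
    show "((\<lambda>t. (1 / real n) * integral {0..t}
              (\<lambda>\<tau>. \<Sum>i<n. s \<tau> (X \<tau> i) \<bullet> vel_particles \<gamma> (s \<tau>) n (X \<tau>) i))
            has_real_derivative (1 / real n) * (\<Sum>i<n. s t (X t i) \<bullet> vel_particles \<gamma> (s t) n (X t) i))
          (at t within {0..})"
      by (intro DERIV_cmult integral_has_real_derivative_atLeast entropy_rate_cont t)
    show "(1 / real n) * (\<Sum>i<n. s t (X t i) \<bullet> vel_particles \<gamma> (s t) n (X t) i) \<le> 0"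
      by (simp add: divide_nonpos_nonneg sum_inner_vel_particles_nonpos)
  qed
qed

lemma euler_step_sum_eq:
  assumes "\<And>i. i < n \<Longrightarrow> X' i = X i + dt *\<^sub>R vel_particles \<gamma> s n X i"
  shows "(\<Sum>i<n. X' i) = (\<Sum>i<n. X i)"
proof -
  have "(\<Sum>i<n. X' i) = (\<Sum>i<n. X i) + dt *\<^sub>R (\<Sum>i<n. vel_particles \<gamma> s n X i)"
    using assms by (simp add: sum.distrib scaleR_sum_right)
  then show ?thesis
    by (simp add: sum_vel_particles_eq_0)
qed

lemma cumulative_entropy_Suc_le:
  assumes "0 \<le> dt"
  shows "dt / real n * (\<Sum>j\<in>{1..Suc k}. \<Sum>i<n. s (X j i) \<bullet> vel_particles \<gamma> s n (X j) i)
           \<le> dt / real n * (\<Sum>j\<in>{1..k}. \<Sum>i<n. s (X j i) \<bullet> vel_particles \<gamma> s n (X j) i)"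
proof -
  have "dt / real n * (\<Sum>i<n. s (X (Suc k) i) \<bullet> vel_particles \<gamma> s n (X (Suc k)) i) \<le> 0"
    using assms by (intro mult_nonneg_nonpos sum_inner_vel_particles_nonpos) simp_all
  then show ?thesis
    by (simp add: sum.cl_ivl_Suc distrib_left)
qed

theorem proposition3p1:
  fixes \<gamma> :: real
  assumes "- real CARD('n::finite) - 1 \<le> \<gamma>" and "\<gamma> \<le> 1"
  shows
   "(\<forall>(s :: real \<Rightarrow> real^'n \<Rightarrow> real^'n) (u :: real \<Rightarrow> (real^'n) measure).
      weak_continuity_solution u (\<lambda>t. vel \<gamma> (s t) (u t))
      \<and> (\<forall>t\<ge>0. s t \<in> borel_measurable borel)
      \<and> (\<forall>t\<ge>0. integrable (u t) (\<lambda>x. (norm x)^2))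
      \<and> (\<forall>t\<ge>0. integrable (u t \<Otimes>\<^sub>M u t)
            (\<lambda>(x, y). norm (kerA \<gamma> (x - y) *v (s t x - s t y)) * (1 + norm x + norm (s t x))))
      \<and> continuous_on {0..} (\<lambda>\<tau>. \<integral>x. s \<tau> x \<bullet> vel \<gamma> (s \<tau>) (u \<tau>) x \<partial>u \<tau>)
      \<longrightarrow> (\<forall>t\<ge>0. measure (u t) (space (u t)) = measure (u 0) (space (u 0))
             \<and> (\<integral>x. x \<partial>u t) = (\<integral>x. x \<partial>u 0)
             \<and> (\<integral>x. (norm x)^2 \<partial>u t) = (\<integral>x. (norm x)^2 \<partial>u 0)
             \<and> (\<exists>D. ((\<lambda>t. integral {0..t} (\<lambda>\<tau>. \<integral>x. s \<tau> x \<bullet> vel \<gamma> (s \<tau>) (u \<tau>) x \<partial>u \<tau>))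
                      has_real_derivative D) (at t within {0..}) \<and> D \<le> 0)))
    \<and> (\<forall>(s :: real \<Rightarrow> real^'n \<Rightarrow> real^'n) (X :: real \<Rightarrow> nat \<Rightarrow> real^'n) (n :: nat).
      n \<ge> 1
      \<and> (\<forall>i<n. \<forall>t\<ge>0. ((\<lambda>\<tau>. X \<tau> i) has_vector_derivative vel_particles \<gamma> (s t) n (X t) i) (at t within {0..}))
      \<and> continuous_on {0..} (\<lambda>\<tau>. \<Sum>i<n. s \<tau> (X \<tau> i) \<bullet> vel_particles \<gamma> (s \<tau>) n (X \<tau>) i)
      \<longrightarrow> (\<forall>t\<ge>0. (1 / real n) *\<^sub>R (\<Sum>i<n. X t i) = (1 / real n) *\<^sub>R (\<Sum>i<n. X 0 i)
             \<and> (1 / real n) * (\<Sum>i<n. (norm (X t i))^2) = (1 / real n) * (\<Sum>i<n. (norm (X 0 i))^2)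
             \<and> (\<exists>D. ((\<lambda>t. (1 / real n) * integral {0..t}
                        (\<lambda>\<tau>. \<Sum>i<n. s \<tau> (X \<tau> i) \<bullet> vel_particles \<gamma> (s \<tau>) n (X \<tau>) i))
                      has_real_derivative D) (at t within {0..}) \<and> D \<le> 0)))
    \<and> (\<forall>(s :: real^'n \<Rightarrow> real^'n) (X :: nat \<Rightarrow> nat \<Rightarrow> real^'n) (n :: nat) (dt :: real).
      n \<ge> 1 \<and> dt > 0
      \<and> (\<forall>k. \<forall>i<n. X (Suc k) i = X k i + dt *\<^sub>R vel_particles \<gamma> s n (X k) i)
      \<longrightarrow> (\<forall>k. (1 / real n) *\<^sub>R (\<Sum>i<n. X (Suc k) i) = (1 / real n) *\<^sub>R (\<Sum>i<n. X k i)
             \<and> (dt / real n) * (\<Sum>j\<in>{1..Suc k}. \<Sum>i<n. s (X j i) \<bullet> vel_particles \<gamma> s n (X j) i)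
               \<le> (dt / real n) * (\<Sum>j\<in>{1..k}. \<Sum>i<n. s (X j i) \<bullet> vel_particles \<gamma> s n (X j) i)))"
  by (intro conjI allI impI; elim conjE;
      blast intro: continuity_equation_conservation particle_conservation euler_step_sum_eq
        cumulative_entropy_Suc_le less_imp_le arg_cong[where f = "scaleR _"]
        arg_cong[where f = "times _"])

end
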